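(* Let $\mathcal{H}$ be a complex separable Hilbert space, let $\mathcal{A}=(A_n)_{n\ge 0}$ be a sequence of positive invertible bounded operators on $\mathcal{H}$ with $\sup_n\|A_n\|<\infty$, and let $W_{\mathcal A}$ be the associated operator-valued weighted shift on $\ell^2(\mathcal H)$. Let $k\ge 1$ be an integer. Then $W_{\mathcal A}$ is $k$-hyponormal if and only if $W_{\mathcal A}$ is $k_E$-hyponormal.
   Context: $\ell^2(\mathcal H)=\{(x_n)_{n\ge0}: x_n\in\mathcal H,\ \sum_n\|x_n\|^2<\infty\}$ with inner product $\langle x,y\rangle=\sum_n\langle x_n,y_n\rangle$. The operator-valued weighted shift is $W_{\mathcal A}(x_0,x_1,x_2,\dots)=(0,A_0x_0,A_1x_1,\dots)$. A bounded operator $T$ is $k$-hyponormal if the operator matrix $(T^{*j}T^{i})_{0\le i,j\le k}$ is positive (equivalently $([T^{*j},T^i])_{1\le i,j\le k}\ge0$, where $[X,Y]=XY-YX$), and $k_E$-hyponormal (Embry $k$-hyponormal) if the operator matrix $(T^{*(i+j)}T^{i+j})_{0\le i,j\le k}$ is positive. *)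

theory Defs
  imports "HOL-Analysis.Analysis"
begin

text \<open>The inner product is linear in
the first argument and conjugate-linear in the second.\<close>

class cvector_space = real_vector +
  fixes scaleC :: "complex \<Rightarrow> 'a \<Rightarrow> 'a"
  assumes scaleC_add_right: "scaleC a (x + y) = scaleC a x + scaleC a y"
    and scaleC_add_left: "scaleC (a + b) x = scaleC a x + scaleC b x"
    and scaleC_scaleC: "scaleC a (scaleC b x) = scaleC (a * b) x"
    and scaleC_one: "scaleC 1 x = x"
    and scaleR_scaleC: "scaleR r x = scaleC (complex_of_real r) x"

class cinner_space = cvector_space + real_normed_vector +
  fixes cinner :: "'a \<Rightarrow> 'a \<Rightarrow> complex"
  assumes cinner_commute: "cinner x y = cnj (cinner y x)"
    and cinner_add_left: "cinner (x + y) z = cinner x z + cinner y z"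
    and cinner_scaleC_left: "cinner (scaleC c x) y = c * cinner x y"
    and cinner_ge_zero: "0 \<le> Re (cinner x x)"
    and cinner_eq_zero_iff: "cinner x x = 0 \<longleftrightarrow> x = 0"
    and norm_eq_sqrt_cinner: "norm x = sqrt (Re (cinner x x))"

class chilbert_space = cinner_space + complete_space

definition bounded_cop :: "('a::cinner_space \<Rightarrow> 'a) \<Rightarrow> bool" where
  "bounded_cop T \<longleftrightarrow> (\<forall>x y. T (x + y) = T x + T y) \<and> (\<forall>c x. T (scaleC c x) = scaleC c (T x))
     \<and> (\<exists>K. \<forall>x. norm (T x) \<le> norm x * K)"

definition cpos :: "complex \<Rightarrow> bool" where
  "cpos z \<longleftrightarrow> Im z = 0 \<and> 0 \<le> Re z"

definition positive_op :: "('a::cinner_space \<Rightarrow> 'a) \<Rightarrow> bool" where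
  "positive_op T \<longleftrightarrow> (\<forall>x. cpos (cinner (T x) x))"

definition invertible_op :: "('a::cinner_space \<Rightarrow> 'a) \<Rightarrow> bool" where
  "invertible_op T \<longleftrightarrow> (\<exists>S. bounded_cop S \<and> (\<forall>x. S (T x) = x) \<and> (\<forall>x. T (S x) = x))"

definition l2seq :: "(nat \<Rightarrow> 'a::cinner_space) set" where
  "l2seq = {x. summable (\<lambda>n. (norm (x n))^2)}"

definition l2inner :: "(nat \<Rightarrow> 'a::cinner_space) \<Rightarrow> (nat \<Rightarrow> 'a) \<Rightarrow> complex" where
  "l2inner x y = (\<Sum>n. cinner (x n) (y n))"

definition l2adjoint :: "((nat \<Rightarrow> 'a::cinner_space) \<Rightarrow> (nat \<Rightarrow> 'a)) \<Rightarrow> (nat \<Rightarrow> 'a) \<Rightarrow> (nat \<Rightarrow> 'a)" where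
  "l2adjoint T = (SOME S. (\<forall>y\<in>l2seq. S y \<in> l2seq) \<and>
       (\<forall>x\<in>l2seq. \<forall>y\<in>l2seq. l2inner (T x) y = l2inner x (S y)))"

definition wshift :: "(nat \<Rightarrow> 'a::cinner_space \<Rightarrow> 'a) \<Rightarrow> (nat \<Rightarrow> 'a) \<Rightarrow> (nat \<Rightarrow> 'a)" where
  "wshift A x = (\<lambda>n. if n = 0 then 0 else A (n - 1) (x (n - 1)))"

text \<open>Positivity of a (k+1)x(k+1) operator matrix (M i j), i,j = 0..k, acting on the
direct sum of k+1 copies of l^2(H): the (i,j) entry is row i, column j, so
<M x, x> = sum_{i,j} <M i j (x j), x i>.\<close>

definition op_matrix_pos :: "nat \<Rightarrow> (nat \<Rightarrow> nat \<Rightarrow> (nat \<Rightarrow> 'a::cinner_space) \<Rightarrow> (nat \<Rightarrow> 'a)) \<Rightarrow> bool" where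
  "op_matrix_pos k M \<longleftrightarrow> (\<forall>x. (\<forall>i\<le>k. x i \<in> l2seq) \<longrightarrow>
      cpos (\<Sum>i\<le>k. \<Sum>j\<le>k. l2inner (M i j (x j)) (x i)))"

definition k_hyponormal :: "nat \<Rightarrow> ((nat \<Rightarrow> 'a::cinner_space) \<Rightarrow> (nat \<Rightarrow> 'a)) \<Rightarrow> bool" where
  "k_hyponormal k T \<longleftrightarrow> op_matrix_pos k (\<lambda>i j. (l2adjoint T ^^ j) \<circ> (T ^^ i))"

definition embry_k_hyponormal :: "nat \<Rightarrow> ((nat \<Rightarrow> 'a::cinner_space) \<Rightarrow> (nat \<Rightarrow> 'a)) \<Rightarrow> bool" where
  "embry_k_hyponormal k T \<longleftrightarrow> op_matrix_pos k (\<lambda>i j. (l2adjoint T ^^ (i + j)) \<circ> (T ^^ (i + j)))"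

end

theory Submission
  imports Defs "HOL-Library.Function_Algebras"
begin

text \<open>Both conditions say that a quadratic form on \<open>(k+1)\<close>-tuples in \<open>\<ell>\<^sup>2(\<H>)\<close> is
  nonnegative: \<open>T\<close> is \<open>k\<close>-hyponormal iff \<open>\<Sum>\<^sub>i\<^sub>,\<^sub>j \<langle>T\<^sup>i x\<^sub>j, T\<^sup>j x\<^sub>i\<rangle> \<ge> 0\<close>, and
  \<open>k\<^sub>E\<close>-hyponormal iff the same holds for the tuples \<open>x\<^sub>j = T\<^sup>j y\<^sub>j\<close>.  So \<open>k\<close>-hyponormality
  implies \<open>k\<^sub>E\<close>-hyponormality for every operator.

  For the weighted shift, \<open>W\<^sup>i x\<^sub>j\<close> and \<open>W\<^sup>j x\<^sub>i\<close> only meet in coordinates of equal level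
  \<open>p - j\<close>, so on finitely supported tuples the form is an orthogonal sum over levels.  On a
  single level every component is one vector, which by invertibility of the weights is a
  product of weights applied to an arbitrary vector; the level form then becomes an Embry
  form of a tuple concentrated in one coordinate, hence is nonnegative.  Truncation and
  closedness of the nonnegative reals pass from finitely supported tuples to all of
  \<open>\<ell>\<^sup>2(\<H>)\<close>.\<close>

section \<open>Complex inner product spaces\<close>

lemma scaleC_zero_left [simp]: "scaleC 0 (x::'a::cvector_space) = 0"
  by (metis scaleR_scaleC scaleR_zero_left of_real_0)

lemma scaleC_minus1_left: "scaleC (-1) (x::'a::cvector_space) = - x"
  by (metis scaleR_scaleC scaleR_minus1_left of_real_1 of_real_minus)

lemma cinner_zero_left [simp]: "cinner 0 (y::'a::cinner_space) = 0"
  by (metis cinner_scaleC_left mult_zero_left scaleC_zero_left)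

lemma cinner_zero_right [simp]: "cinner (x::'a::cinner_space) 0 = 0"
  by (metis cinner_commute cinner_zero_left complex_cnj_zero)

lemma cinner_add_right: "cinner (x::'a::cinner_space) (y + z) = cinner x y + cinner x z"
  by (metis cinner_commute cinner_add_left complex_cnj_add)

lemma cinner_scaleC_right: "cinner (x::'a::cinner_space) (scaleC c y) = cnj c * cinner x y"
  by (metis cinner_commute cinner_scaleC_left complex_cnj_mult)

lemma cinner_minus_left: "cinner (- x::'a::cinner_space) y = - cinner x y"
  by (metis cinner_scaleC_left scaleC_minus1_left mult_minus1)

lemma cinner_minus_right: "cinner (x::'a::cinner_space) (- y) = - cinner x y"
  by (metis cinner_commute cinner_minus_left complex_cnj_minus)

lemma cinner_diff_left: "cinner (x - y::'a::cinner_space) z = cinner x z - cinner y z"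
  by (metis cinner_add_left cinner_minus_left diff_conv_add_uminus)

lemma cinner_diff_right: "cinner (x::'a::cinner_space) (y - z) = cinner x y - cinner x z"
  by (metis cinner_add_right cinner_minus_right diff_conv_add_uminus)

lemma power2_norm_eq_cinner: "(norm (x::'a::cinner_space))\<^sup>2 = Re (cinner x x)"
  by (simp add: norm_eq_sqrt_cinner cinner_ge_zero)

lemma abs_Re_cinner_le: "\<bar>Re (cinner (x::'a::cinner_space) y)\<bar> \<le> (norm x)\<^sup>2 + (norm y)\<^sup>2"
proof -
  have sym: "Re (cinner y x) = Re (cinner x y)"
    by (subst cinner_commute) simp
  have "0 \<le> Re (cinner (x - y) (x - y))" "0 \<le> Re (cinner (x + y) (x + y))"
    by (rule cinner_ge_zero)+
  then have "0 \<le> Re (cinner x x) - 2 * Re (cinner x y) + Re (cinner y y)"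
    and "0 \<le> Re (cinner x x) + 2 * Re (cinner x y) + Re (cinner y y)"
    by (simp_all add: cinner_diff_left cinner_diff_right cinner_add_left cinner_add_right sym)
  then show ?thesis
    by (simp add: power2_norm_eq_cinner abs_le_iff)
qed

lemma norm_cinner_le: "norm (cinner (x::'a::cinner_space) y) \<le> 2 * ((norm x)\<^sup>2 + (norm y)\<^sup>2)"
proof -
  have norm_i: "norm (scaleC \<i> x) = norm x"
    by (simp add: norm_eq_sqrt_cinner cinner_scaleC_left cinner_scaleC_right)
  have "\<bar>Im (cinner x y)\<bar> = \<bar>Re (cinner (scaleC \<i> x) y)\<bar>"
    by (simp add: cinner_scaleC_left)
  also have "\<dots> \<le> (norm x)\<^sup>2 + (norm y)\<^sup>2"
    using abs_Re_cinner_le[of "scaleC \<i> x" y] by (simp add: norm_i)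
  finally show ?thesis
    using cmod_le[of "cinner x y"] abs_Re_cinner_le[of x y] by argo
qed

lemma bounded_cop_add: "bounded_cop T \<Longrightarrow> T (x + y) = T x + T y"
  by (simp add: bounded_cop_def)

lemma bounded_cop_scaleC: "bounded_cop T \<Longrightarrow> T (scaleC c x) = scaleC c (T x)"
  by (simp add: bounded_cop_def)

lemma bounded_cop_zero: "bounded_cop T \<Longrightarrow> T 0 = 0"
  by (metis add_cancel_right_right bounded_cop_add)

lemma bounded_cop_norm_le_onorm:
  assumes "bounded_cop T"
  shows "norm (T x) \<le> onorm T * norm x"
proof -
  obtain K where K: "\<And>x. norm (T x) \<le> norm x * K"
    using assms unfolding bounded_cop_def by blast
  have "bounded_linear T"
    using assms K by (intro bounded_linear_intro[where K = K])
      (simp_all add: bounded_cop_add scaleR_scaleC bounded_cop_scaleC)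
  then show ?thesis
    by (rule onorm)
qed

lemma positive_op_cinner_commute:
  assumes T: "bounded_cop T" and pos: "positive_op T"
  shows "cinner (T x) y = cinner x (T y)"
proof -
  define B where "B x y = cinner (T x) y - cinner x (T y)" for x y
  have diag: "B u u = 0" for u
  proof -
    have "Im (cinner (T u) u) = 0"
      using pos by (simp add: positive_op_def cpos_def)
    then have "cinner u (T u) = cinner (T u) u"
      by (subst cinner_commute) (simp add: complex_eq_iff)
    then show ?thesis
      by (simp add: B_def)
  qed
  have B_add: "B (u + v) (u + v) = B u u + B u v + B v u + B v v" for u v
    by (simp add: B_def bounded_cop_add[OF T] cinner_add_left cinner_add_right)
  have B_i: "B u (scaleC \<i> v) = - \<i> * B u v" "B (scaleC \<i> v) u = \<i> * B v u" for u v
    by (simp_all add: B_def bounded_cop_scaleC[OF T] cinner_scaleC_left cinner_scaleC_right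
        algebra_simps)
  \<comment> \<open>polarization: a sesquilinear form vanishing on the diagonal vanishes\<close>
  have "B x y + B y x = 0"
    using B_add[of x y] by (simp add: diag)
  moreover have "\<i> * (B y x - B x y) = 0"
    using B_add[of x "scaleC \<i> y"] by (simp add: diag B_i algebra_simps)
  ultimately have "B x y = 0"
    by simp
  then show ?thesis
    by (simp add: B_def)
qed

lemma invertible_op_surj: "invertible_op T \<Longrightarrow> surj T"
  unfolding invertible_op_def by (metis surjI)

section \<open>Square-summable sequences\<close>

lemma l2seq_dominated:
  assumes "a \<in> l2seq" and "\<And>n. norm (b n) \<le> norm (a n)"
  shows "b \<in> l2seq"
proof -
  have "norm ((norm (b n))\<^sup>2) \<le> (norm (a n))\<^sup>2" for n
    using assms(2)[of n] by (simp add: power_mono)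
  with assms(1) show ?thesis
    unfolding l2seq_def by (auto intro: summable_comparison_test')
qed

lemma add_in_l2seq:
  assumes "a \<in> l2seq" and "b \<in> l2seq"
  shows "a + b \<in> l2seq"
proof -
  have "summable (\<lambda>n. 2 * (norm (a n))\<^sup>2 + 2 * (norm (b n))\<^sup>2)"
    using assms by (intro summable_add summable_mult) (auto simp: l2seq_def)
  moreover have "norm ((norm (a n + b n))\<^sup>2) \<le> 2 * (norm (a n))\<^sup>2 + 2 * (norm (b n))\<^sup>2" for n
  proof -
    have "(norm (a n + b n))\<^sup>2 \<le> (norm (a n) + norm (b n))\<^sup>2"
      by (intro power_mono norm_triangle_ineq) simp
    also have "\<dots> \<le> 2 * (norm (a n))\<^sup>2 + 2 * (norm (b n))\<^sup>2"
      using zero_le_power2[of "norm (a n) - norm (b n)"]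
      unfolding power2_diff power2_sum by linarith
    finally show ?thesis
      by simp
  qed
  ultimately show ?thesis
    unfolding l2seq_def by (auto intro: summable_comparison_test')
qed

lemma summable_cinner_l2seq:
  assumes "a \<in> l2seq" and "b \<in> l2seq"
  shows "summable (\<lambda>n. cinner (a n) (b n))"
proof (rule summable_comparison_test')
  show "summable (\<lambda>n. 2 * ((norm (a n))\<^sup>2 + (norm (b n))\<^sup>2))"
    using assms by (intro summable_mult summable_add) (auto simp: l2seq_def)
qed (rule norm_cinner_le)

lemma l2inner_add_left:
  assumes "a \<in> l2seq" "b \<in> l2seq" "c \<in> l2seq"
  shows "l2inner (a + b) c = l2inner a c + l2inner b c"
  using summable_cinner_l2seq[OF assms(1,3)] summable_cinner_l2seq[OF assms(2,3)]
  by (simp add: l2inner_def cinner_add_left suminf_add)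

lemma l2inner_add_right:
  assumes "a \<in> l2seq" "b \<in> l2seq" "c \<in> l2seq"
  shows "l2inner c (a + b) = l2inner c a + l2inner c b"
  using summable_cinner_l2seq[OF assms(3,1)] summable_cinner_l2seq[OF assms(3,2)]
  by (simp add: l2inner_def cinner_add_right suminf_add)

lemma l2inner_zero_left [simp]: "l2inner 0 c = 0"
  by (simp add: l2inner_def)

lemma l2inner_commute:
  assumes "a \<in> l2seq" and "b \<in> l2seq"
  shows "l2inner a b = cnj (l2inner b a)"
proof -
  have "(\<lambda>n. cinner (b n) (a n)) sums l2inner b a"
    unfolding l2inner_def using summable_cinner_l2seq[OF assms(2,1)] by (rule summable_sums)
  then have "(\<lambda>n. cinner (a n) (b n)) sums cnj (l2inner b a)"
    by (subst cinner_commute) (rule sums_cnj[THEN iffD2])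
  then show ?thesis
    unfolding l2inner_def by (rule sums_unique[symmetric])
qed

definition delta_seq :: "nat \<Rightarrow> 'a::zero \<Rightarrow> nat \<Rightarrow> 'a" where
  "delta_seq q v = (\<lambda>p. if p = q then v else 0)"

lemma delta_seq_in_l2seq [simp]: "delta_seq q v \<in> l2seq"
proof -
  have "(\<lambda>n. (norm (delta_seq q v n))\<^sup>2) = (\<lambda>n. if n = q then (norm v)\<^sup>2 else 0)"
    by (auto simp: delta_seq_def)
  then show ?thesis
    by (simp add: l2seq_def)
qed

lemma l2inner_delta_seq_left: "l2inner (delta_seq q v) b = cinner v (b q)"
  unfolding l2inner_def by (subst suminf_finite[of "{q}"]) (auto simp: delta_seq_def)

lemma l2inner_delta_seq_right: "l2inner a (delta_seq q v) = cinner (a q) v"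
  unfolding l2inner_def by (subst suminf_finite[of "{q}"]) (auto simp: delta_seq_def)

definition truncate :: "nat \<Rightarrow> (nat \<Rightarrow> 'a::zero) \<Rightarrow> nat \<Rightarrow> 'a" where
  "truncate N x = (\<lambda>p. if p < N then x p else 0)"

lemma truncate_in_l2seq: "x \<in> l2seq \<Longrightarrow> truncate N x \<in> l2seq"
  by (erule l2seq_dominated) (simp add: truncate_def)

lemma l2inner_truncate:
  "l2inner (truncate N a) (truncate N' b) = (\<Sum>q<min N N'. cinner (a q) (b q))"
  unfolding l2inner_def truncate_def by (subst suminf_finite[of "{..<min N N'}"]) auto

lemma closed_cpos: "closed {z. cpos z}"
  unfolding cpos_def
  by (intro closed_Collect_conj closed_Collect_eq closed_Collect_le continuous_on_Re
      continuous_on_Im continuous_on_const continuous_on_id)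

section \<open>Hyponormality as positivity of a quadratic form\<close>

definition is_l2adjoint ::
    "((nat \<Rightarrow> 'a::cinner_space) \<Rightarrow> nat \<Rightarrow> 'a) \<Rightarrow> ((nat \<Rightarrow> 'a) \<Rightarrow> nat \<Rightarrow> 'a) \<Rightarrow> bool" where
  "is_l2adjoint S T \<longleftrightarrow> S ` l2seq \<subseteq> l2seq \<and>
     (\<forall>x\<in>l2seq. \<forall>y\<in>l2seq. l2inner (T x) y = l2inner x (S y))"

lemma is_l2adjoint_l2adjoint:
  assumes "is_l2adjoint S T"
  shows "is_l2adjoint (l2adjoint T) T"
proof -
  have "l2adjoint T = (SOME S. is_l2adjoint S T)"
    unfolding l2adjoint_def is_l2adjoint_def image_subset_iff ..
  then show ?thesis
    using someI[of "\<lambda>S. is_l2adjoint S T", OF assms] by simp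
qed

lemma funpow_in_l2seq:
  fixes T :: "(nat \<Rightarrow> 'a::cinner_space) \<Rightarrow> nat \<Rightarrow> 'a"
  shows "T ` l2seq \<subseteq> l2seq \<Longrightarrow> x \<in> l2seq \<Longrightarrow> (T ^^ i) x \<in> l2seq"
  by (induction i) auto

lemma is_l2adjoint_funpow:
  assumes S: "is_l2adjoint S T" and T: "T ` l2seq \<subseteq> l2seq"
    and a: "a \<in> l2seq" and b: "b \<in> l2seq"
  shows "l2inner ((S ^^ j) a) b = l2inner a ((T ^^ j) b)"
  using b
proof (induction j arbitrary: b)
  case 0
  then show ?case by simp
next
  case (Suc j)
  have S_l2: "S ` l2seq \<subseteq> l2seq"
    using S by (simp add: is_l2adjoint_def)
  have Sa: "(S ^^ j) a \<in> l2seq" and SSa: "(S ^^ Suc j) a \<in> l2seq"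
    using funpow_in_l2seq[OF S_l2 a] by blast+
  have Tb: "T b \<in> l2seq"
    using T Suc.prems by blast
  have "l2inner ((S ^^ Suc j) a) b = cnj (l2inner b (S ((S ^^ j) a)))"
    using l2inner_commute[OF SSa Suc.prems] by simp
  also have "\<dots> = cnj (l2inner (T b) ((S ^^ j) a))"
    using S Sa Suc.prems by (simp add: is_l2adjoint_def)
  also have "\<dots> = l2inner ((S ^^ j) a) (T b)"
    by (rule l2inner_commute[OF Sa Tb, symmetric])
  also have "\<dots> = l2inner a ((T ^^ Suc j) b)"
    using Suc.IH[OF Tb] by (simp add: funpow_swap1)
  finally show ?case .
qed

text \<open>The quadratic form of the operator matrix \<open>(T\<^sup>*\<^sup>j T\<^sup>i)\<close>, written without adjoints.\<close>

definition hyponormal_form :: "((nat \<Rightarrow> 'a::cinner_space) \<Rightarrow> nat \<Rightarrow> 'a) \<Rightarrow> nat \<Rightarrow>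
    (nat \<Rightarrow> nat \<Rightarrow> 'a) \<Rightarrow> (nat \<Rightarrow> nat \<Rightarrow> 'a) \<Rightarrow> complex" where
  "hyponormal_form T k x w = (\<Sum>i\<le>k. \<Sum>j\<le>k. l2inner ((T ^^ i) (x j)) ((T ^^ j) (w i)))"

lemma hyponormal_form_cong:
  "(\<And>j. j \<le> k \<Longrightarrow> x j = x' j) \<Longrightarrow> (\<And>j. j \<le> k \<Longrightarrow> w j = w' j) \<Longrightarrow>
    hyponormal_form T k x w = hyponormal_form T k x' w'"
  unfolding hyponormal_form_def by (intro sum.cong refl) auto

lemma op_matrix_pos_adjoint_iff:
  assumes S: "is_l2adjoint S T" and T: "T ` l2seq \<subseteq> l2seq"
  shows "op_matrix_pos k (\<lambda>i j. (l2adjoint T ^^ f i j) \<circ> (T ^^ g i j)) \<longleftrightarrow>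
    (\<forall>x. (\<forall>i\<le>k. x i \<in> l2seq) \<longrightarrow>
      cpos (\<Sum>i\<le>k. \<Sum>j\<le>k. l2inner ((T ^^ g i j) (x j)) ((T ^^ f i j) (x i))))"
proof -
  have adj: "l2inner ((l2adjoint T ^^ f i j) ((T ^^ g i j) (x j))) (x i)
      = l2inner ((T ^^ g i j) (x j)) ((T ^^ f i j) (x i))"
    if "x i \<in> l2seq" "x j \<in> l2seq" for x i j
    using is_l2adjoint_funpow[OF is_l2adjoint_l2adjoint[OF S] T] funpow_in_l2seq[OF T] that
    by blast
  have "(\<Sum>i\<le>k. \<Sum>j\<le>k. l2inner (((l2adjoint T ^^ f i j) \<circ> (T ^^ g i j)) (x j)) (x i))
      = (\<Sum>i\<le>k. \<Sum>j\<le>k. l2inner ((T ^^ g i j) (x j)) ((T ^^ f i j) (x i)))"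
    if "\<forall>i\<le>k. x i \<in> l2seq" for x
    using that by (intro sum.cong refl) (simp add: adj)
  then show ?thesis
    unfolding op_matrix_pos_def by auto
qed

lemma k_hyponormal_iff_hyponormal_form:
  assumes "is_l2adjoint S T" and "T ` l2seq \<subseteq> l2seq"
  shows "k_hyponormal k T \<longleftrightarrow>
    (\<forall>x. (\<forall>i\<le>k. x i \<in> l2seq) \<longrightarrow> cpos (hyponormal_form T k x x))"
  using op_matrix_pos_adjoint_iff[OF assms, of k "\<lambda>i j. j" "\<lambda>i j. i"]
  by (simp add: k_hyponormal_def hyponormal_form_def)

lemma embry_k_hyponormal_iff_hyponormal_form:
  assumes "is_l2adjoint S T" and "T ` l2seq \<subseteq> l2seq"
  shows "embry_k_hyponormal k T \<longleftrightarrow>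
    (\<forall>y. (\<forall>i\<le>k. y i \<in> l2seq) \<longrightarrow>
      cpos (hyponormal_form T k (\<lambda>j. (T ^^ j) (y j)) (\<lambda>j. (T ^^ j) (y j))))"
proof -
  have "(T ^^ i) ((T ^^ j) v) = (T ^^ (i + j)) v" "(T ^^ j) ((T ^^ i) v) = (T ^^ (i + j)) v"
    for i j v
    by (metis comp_apply funpow_add add.commute)+
  then show ?thesis
    using op_matrix_pos_adjoint_iff[OF assms, of k "\<lambda>i j. i + j" "\<lambda>i j. i + j"]
    by (simp add: embry_k_hyponormal_def hyponormal_form_def)
qed

lemma k_hyponormal_imp_embry_k_hyponormal:
  assumes "is_l2adjoint S T" and T: "T ` l2seq \<subseteq> l2seq" and "k_hyponormal k T"
  shows "embry_k_hyponormal k T"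
  using assms funpow_in_l2seq[OF T]
  by (simp add: k_hyponormal_iff_hyponormal_form embry_k_hyponormal_iff_hyponormal_form)

lemma hyponormal_form_add:
  assumes add: "\<And>x y. T (x + y) = T x + T y" and T: "T ` l2seq \<subseteq> l2seq"
    and x: "\<forall>j\<le>k. x j \<in> l2seq" and w: "\<forall>j\<le>k. w j \<in> l2seq"
  shows "hyponormal_form T k (x + w) (x + w) = hyponormal_form T k x x + hyponormal_form T k w w
    + hyponormal_form T k x w + hyponormal_form T k w x"
proof -
  have funpow_add_seq: "(T ^^ i) (a + b) = (T ^^ i) a + (T ^^ i) b" for i a b
    by (induction i) (simp_all only: funpow.simps comp_apply id_apply add)
  have "l2inner ((T ^^ i) (x j + w j)) ((T ^^ j) (x i + w i))
      = l2inner ((T ^^ i) (x j)) ((T ^^ j) (x i)) + l2inner ((T ^^ i) (w j)) ((T ^^ j) (w i))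
      + l2inner ((T ^^ i) (x j)) ((T ^^ j) (w i)) + l2inner ((T ^^ i) (w j)) ((T ^^ j) (x i))"
    if "i \<le> k" "j \<le> k" for i j
  proof -
    have l2: "(T ^^ i) (x j) \<in> l2seq" "(T ^^ i) (w j) \<in> l2seq"
      "(T ^^ j) (x i) \<in> l2seq" "(T ^^ j) (w i) \<in> l2seq"
      using x w that by (simp_all add: funpow_in_l2seq[OF T])
    show ?thesis
      using add_in_l2seq[OF l2(1,2)] add_in_l2seq[OF l2(3,4)] l2
      by (simp add: funpow_add_seq l2inner_add_left l2inner_add_right algebra_simps)
  qed
  then show ?thesis
    by (simp add: hyponormal_form_def sum.distrib)
qed

section \<open>The operator-valued weighted shift\<close>

text \<open>\<open>weight_prod A q m = A\<^sub>q\<^sub>+\<^sub>m\<^sub>-\<^sub>1 \<cdots> A\<^sub>q\<close> is the weight by which \<open>W\<^sub>A\<^sup>m\<close> carries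
  coordinate \<open>q\<close> to coordinate \<open>q + m\<close>.\<close>

primrec weight_prod :: "(nat \<Rightarrow> 'a \<Rightarrow> 'a) \<Rightarrow> nat \<Rightarrow> nat \<Rightarrow> 'a \<Rightarrow> 'a" where
  "weight_prod A q 0 x = x"
| "weight_prod A q (Suc m) x = A (q + m) (weight_prod A q m x)"

lemma weight_prod_zero: "\<forall>n. bounded_cop (A n) \<Longrightarrow> weight_prod A q m 0 = 0"
  by (induction m) (simp_all add: bounded_cop_zero)

lemma weight_prod_weight_prod:
  "weight_prod A (q + m) m' (weight_prod A q m x) = weight_prod A q (m + m') x"
  by (induction m') (simp_all add: add.assoc)

lemma surj_weight_prod:
  assumes "\<forall>n. surj (A n)"
  shows "surj (weight_prod A q m)"
proof (induction m)
  case 0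
  then show ?case
    by (simp add: surj_def)
next
  case (Suc m)
  then show ?case
    using assms by (simp add: surj_def) metis
qed

lemma wshift_funpow_apply:
  assumes "\<forall>n. bounded_cop (A n)"
  shows "(wshift A ^^ i) w p = (if i \<le> p then weight_prod A (p - i) i (w (p - i)) else 0)"
proof (induction i arbitrary: p)
  case 0
  then show ?case by simp
next
  case (Suc i)
  then show ?case
    using assms by (cases p) (auto simp: wshift_def bounded_cop_zero Suc_diff_le)
qed

lemma wshift_add:
  "\<forall>n. bounded_cop (A n) \<Longrightarrow> wshift A (x + y) = wshift A x + wshift A y"
  by (simp add: wshift_def fun_eq_iff bounded_cop_add)

lemma wshift_funpow_zero:
  "\<forall>n. bounded_cop (A n) \<Longrightarrow> (wshift A ^^ i) 0 = 0"
  by (simp add: fun_eq_iff wshift_funpow_apply weight_prod_zero)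

lemma wshift_funpow_delta_seq:
  "\<forall>n. bounded_cop (A n) \<Longrightarrow>
    (wshift A ^^ i) (delta_seq q v) = delta_seq (q + i) (weight_prod A q i v)"
  by (auto simp: fun_eq_iff wshift_funpow_apply delta_seq_def weight_prod_zero)

lemma wshift_funpow_truncate:
  "\<forall>n. bounded_cop (A n) \<Longrightarrow>
    (wshift A ^^ i) (truncate N w) = truncate (N + i) ((wshift A ^^ i) w)"
  by (auto simp: fun_eq_iff wshift_funpow_apply truncate_def weight_prod_zero)

lemma wshift_l2seq:
  assumes norm_A: "\<And>n x. norm (A n x) \<le> M * norm x"
  shows "wshift A ` l2seq \<subseteq> l2seq"
proof
  fix y assume "y \<in> wshift A ` l2seq"
  then obtain x where x: "x \<in> l2seq" and y: "y = wshift A x"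
    by blast
  have "norm ((norm (y (Suc n)))\<^sup>2) \<le> M\<^sup>2 * (norm (x n))\<^sup>2" for n
  proof -
    have "(norm (A n (x n)))\<^sup>2 \<le> (M * norm (x n))\<^sup>2"
      by (intro power_mono norm_A) simp
    then show ?thesis
      by (simp add: y wshift_def power_mult_distrib)
  qed
  moreover have "summable (\<lambda>n. M\<^sup>2 * (norm (x n))\<^sup>2)"
    using x by (intro summable_mult) (simp add: l2seq_def)
  ultimately have "summable (\<lambda>n. (norm (y (Suc n)))\<^sup>2)"
    by (rule summable_comparison_test'[rotated])
  then show "y \<in> l2seq"
    using summable_Suc_iff[of "\<lambda>n. (norm (y n))\<^sup>2"] by (simp add: l2seq_def)
qed

lemma wshift_is_l2adjoint:
  assumes bounded: "\<forall>n. bounded_cop (A n)" and pos: "\<forall>n. positive_op (A n)"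
    and norm_A: "\<And>n x. norm (A n x) \<le> M * norm x"
  shows "is_l2adjoint (\<lambda>y n. A n (y (Suc n))) (wshift A)"
  unfolding is_l2adjoint_def image_subset_iff
proof (intro conjI ballI)
  fix y :: "nat \<Rightarrow> 'a" assume y: "y \<in> l2seq"
  have "norm ((norm (A n (y (Suc n))))\<^sup>2) \<le> M\<^sup>2 * (norm (y (Suc n)))\<^sup>2" for n
  proof -
    have "(norm (A n (y (Suc n))))\<^sup>2 \<le> (M * norm (y (Suc n)))\<^sup>2"
      by (intro power_mono norm_A) simp
    then show ?thesis
      by (simp add: power_mult_distrib)
  qed
  moreover have "summable (\<lambda>n. M\<^sup>2 * (norm (y (Suc n)))\<^sup>2)"
    using y summable_Suc_iff[of "\<lambda>n. (norm (y n))\<^sup>2"]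
    by (intro summable_mult) (simp add: l2seq_def)
  ultimately show "(\<lambda>n. A n (y (Suc n))) \<in> l2seq"
    unfolding l2seq_def mem_Collect_eq by (rule summable_comparison_test'[rotated])
next
  fix x y :: "nat \<Rightarrow> 'a" assume x: "x \<in> l2seq" and y: "y \<in> l2seq"
  have "wshift A x \<in> l2seq"
    using subsetD[OF wshift_l2seq[OF norm_A] imageI[OF x]] .
  then have "summable (\<lambda>n. cinner (wshift A x n) (y n))"
    using y by (rule summable_cinner_l2seq)
  moreover have "cinner (wshift A x (Suc n)) (y (Suc n)) = cinner (x n) (A n (y (Suc n)))" for n
    using positive_op_cinner_commute[of "A n" "x n" "y (Suc n)"] bounded pos
    by (simp add: wshift_def)
  ultimately show "l2inner (wshift A x) y = l2inner x (\<lambda>n. A n (y (Suc n)))"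
    unfolding l2inner_def using suminf_split_head[of "\<lambda>n. cinner (wshift A x n) (y n)"]
    by (simp add: wshift_def)
qed

section \<open>Embry positivity implies \<open>k\<close>-hyponormality for weighted shifts\<close>

definition embry_weight_form ::
    "(nat \<Rightarrow> 'a::cinner_space \<Rightarrow> 'a) \<Rightarrow> nat \<Rightarrow> nat \<Rightarrow> (nat \<Rightarrow> 'a) \<Rightarrow> complex" where
  "embry_weight_form A k q u =
    (\<Sum>i\<le>k. \<Sum>j\<le>k. cinner (weight_prod A q (i + j) (u j)) (weight_prod A q (i + j) (u i)))"

lemma hyponormal_form_wshift_delta_seq:
  assumes "\<forall>n. bounded_cop (A n)"
  shows "hyponormal_form (wshift A) k (\<lambda>j. (wshift A ^^ j) (delta_seq q (u j)))
      (\<lambda>j. (wshift A ^^ j) (delta_seq q (u j))) = embry_weight_form A k q u"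
proof -
  have shift: "(wshift A ^^ i) ((wshift A ^^ j) (delta_seq q v))
      = delta_seq (q + (i + j)) (weight_prod A q (i + j) v)" for i j v
    by (metis comp_apply funpow_add wshift_funpow_delta_seq[OF assms])
  have "l2inner ((wshift A ^^ i) ((wshift A ^^ j) (delta_seq q (u j))))
      ((wshift A ^^ j) ((wshift A ^^ i) (delta_seq q (u i))))
    = cinner (weight_prod A q (i + j) (u j)) (weight_prod A q (i + j) (u i))" for i j
    by (simp only: shift l2inner_delta_seq_left) (simp add: delta_seq_def add.commute)
  then show ?thesis
    unfolding hyponormal_form_def embry_weight_form_def by simp
qed

lemma sum_sum_atMost_window:
  fixes g :: "nat \<Rightarrow> nat \<Rightarrow> 'b::comm_monoid_add"
  assumes "r + K \<le> k"
    and "\<And>i j. i \<le> k \<Longrightarrow> j \<le> k \<Longrightarrow> i < r \<or> r + K < i \<or> j < r \<or> r + K < j \<Longrightarrow> g i j = 0"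
  shows "(\<Sum>i\<le>k. \<Sum>j\<le>k. g i j) = (\<Sum>a\<le>K. \<Sum>b\<le>K. g (a + r) (b + r))"
proof -
  have window: "(\<Sum>i\<le>k. f i) = (\<Sum>a\<le>K. f (a + r))"
    if "\<And>i. i \<le> k \<Longrightarrow> i < r \<or> r + K < i \<Longrightarrow> f i = 0" for f :: "nat \<Rightarrow> 'b"
  proof -
    have "(\<Sum>a\<le>K. f (a + r)) = sum f {r..r + K}"
      using sum.shift_bounds_cl_nat_ivl[of f 0 r K] by (simp add: atLeast0AtMost add.commute)
    also have "\<dots> = (\<Sum>i\<le>k. f i)"
      using assms(1) that by (intro sum.mono_neutral_left) auto
    finally show ?thesis ..
  qed
  have "(\<Sum>i\<le>k. \<Sum>j\<le>k. g i j) = (\<Sum>i\<le>k. \<Sum>b\<le>K. g i (b + r))"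
    using assms(2) by (intro sum.cong refl window) auto
  also have "\<dots> = (\<Sum>a\<le>K. \<Sum>b\<le>K. g (a + r) (b + r))"
    using assms by (intro window sum.neutral ballI) auto
  finally show ?thesis .
qed

text \<open>Padding \<open>w\<close> by \<open>m div 2\<close> zeros and absorbing the parity of \<open>m\<close> into the
  weights turns the exponents \<open>a + b + m\<close> into the exponents \<open>i + j\<close> of an Embry form.\<close>

lemma embry_weight_form_shifted_nonneg:
  assumes bounded: "\<forall>n. bounded_cop (A n)" and embry: "\<And>q u. cpos (embry_weight_form A k q u)"
    and "m \<le> k"
  shows "cpos (\<Sum>a\<le>k - m. \<Sum>b\<le>k - m.
    cinner (weight_prod A q (a + b + m) (w b)) (weight_prod A q (a + b + m) (w a)))"
proof -
  define r s where "r = m div 2" and "s = m mod 2"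
  have m: "m = r + r + s"
    unfolding r_def s_def by presburger
  define u where "u i = (if r \<le> i \<and> i \<le> r + (k - m) then weight_prod A q s (w (i - r)) else 0)"
    for i
  have "embry_weight_form A k (q + s) u = (\<Sum>a\<le>k - m. \<Sum>b\<le>k - m.
      cinner (weight_prod A (q + s) (a + r + (b + r)) (u (b + r)))
        (weight_prod A (q + s) (a + r + (b + r)) (u (a + r))))"
    unfolding embry_weight_form_def using \<open>m \<le> k\<close> m
    by (intro sum_sum_atMost_window) (auto simp: u_def weight_prod_zero[OF bounded])
  also have "\<dots> = (\<Sum>a\<le>k - m. \<Sum>b\<le>k - m.
      cinner (weight_prod A q (a + b + m) (w b)) (weight_prod A q (a + b + m) (w a)))"
  proof (intro sum.cong refl)
    fix a b
    assume "a \<in> {..k - m}" "b \<in> {..k - m}"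
    then have u: "u (a + r) = weight_prod A q s (w a)" "u (b + r) = weight_prod A q s (w b)"
      by (simp_all add: u_def)
    have "s + (a + r + (b + r)) = a + b + m"
      using m by simp
    then have "weight_prod A (q + s) (a + r + (b + r)) (weight_prod A q s x)
        = weight_prod A q (a + b + m) x" for x
      by (simp only: weight_prod_weight_prod)
    then show "cinner (weight_prod A (q + s) (a + r + (b + r)) (u (b + r)))
        (weight_prod A (q + s) (a + r + (b + r)) (u (a + r)))
      = cinner (weight_prod A q (a + b + m) (w b)) (weight_prod A q (a + b + m) (w a))"
      by (simp only: u)
  qed
  finally show ?thesis
    using embry by metis
qed

text \<open>The entry \<open>x j p\<close> of a tuple has level \<open>p + k - j\<close>.  Since \<open>W\<^sub>A\<^sup>i (x j)\<close> and
  \<open>W\<^sub>A\<^sup>j (x i)\<close> pair coordinates \<open>p\<close> and \<open>p'\<close> with \<open>p + i = p' + j\<close>, only entries of equal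
  level interact in the hyponormal form; each level is a single vector per component.\<close>

definition level_entry :: "nat \<Rightarrow> nat \<Rightarrow> (nat \<Rightarrow> nat \<Rightarrow> 'a::zero) \<Rightarrow> nat \<Rightarrow> 'a" where
  "level_entry k L x j = (if k \<le> L + j then x j (L + j - k) else 0)"

definition at_level :: "nat \<Rightarrow> nat \<Rightarrow> (nat \<Rightarrow> nat \<Rightarrow> 'a::zero) \<Rightarrow> nat \<Rightarrow> nat \<Rightarrow> 'a" where
  "at_level k L x j = delta_seq (L + j - k) (level_entry k L x j)"

definition below_level :: "nat \<Rightarrow> nat \<Rightarrow> (nat \<Rightarrow> nat \<Rightarrow> 'a::zero) \<Rightarrow> nat \<Rightarrow> nat \<Rightarrow> 'a" where
  "below_level k L x j = (\<lambda>p. if p + k < L + j then x j p else 0)"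

lemma level_sum_nonneg:
  assumes bounded: "\<forall>n. bounded_cop (A n)" and surj: "\<forall>n. surj (A n)"
    and embry: "\<And>q u. cpos (embry_weight_form A k q u)"
    and zero: "\<And>j. L + j < k \<Longrightarrow> z j = 0"
  shows "cpos (\<Sum>i\<le>k. \<Sum>j\<le>k.
    cinner (weight_prod A (L + j - k) i (z j)) (weight_prod A (L + i - k) j (z i)))"
proof -
  define n m where "n = L - k" and "m = k - L"
  have "\<forall>j. \<exists>v. weight_prod A n (j - m) v = z j"
    using surj_weight_prod[OF surj] by (metis surjD)
  then obtain v where v: "\<And>j. weight_prod A n (j - m) (v j) = z j"
    by metis
  have "(\<Sum>i\<le>k. \<Sum>j\<le>k. cinner (weight_prod A (L + j - k) i (z j)) (weight_prod A (L + i - k) j (z i)))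
    = (\<Sum>a\<le>k - m. \<Sum>b\<le>k - m. cinner (weight_prod A (L + (b + m) - k) (a + m) (z (b + m)))
        (weight_prod A (L + (a + m) - k) (b + m) (z (a + m))))"
    using zero by (intro sum_sum_atMost_window) (auto simp: m_def weight_prod_zero[OF bounded])
  also have "\<dots> = (\<Sum>a\<le>k - m. \<Sum>b\<le>k - m.
      cinner (weight_prod A n (a + b + m) (v (b + m))) (weight_prod A n (a + b + m) (v (a + m))))"
  proof (intro sum.cong refl)
    fix a b
    have offset: "L + (c + m) - k = n + c" for c
      by (simp add: n_def m_def)
    have z: "z (c + m) = weight_prod A n c (v (c + m))" for c
      using v[of "c + m"] by simp
    show "cinner (weight_prod A (L + (b + m) - k) (a + m) (z (b + m)))
        (weight_prod A (L + (a + m) - k) (b + m) (z (a + m)))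
      = cinner (weight_prod A n (a + b + m) (v (b + m))) (weight_prod A n (a + b + m) (v (a + m)))"
      by (simp only: offset z weight_prod_weight_prod) (simp add: ac_simps)
  qed
  finally show ?thesis
    using embry_weight_form_shifted_nonneg[OF bounded embry,
        where m = m and q = n and w = "\<lambda>b. v (b + m)"]
    by (simp add: m_def)
qed

lemma below_level_Suc:
  "below_level k (Suc L) x = below_level k L x + (at_level k L x :: nat \<Rightarrow> nat \<Rightarrow> 'a::monoid_add)"
  by (auto simp: fun_eq_iff below_level_def at_level_def level_entry_def delta_seq_def)

lemma below_level_truncate: "below_level k (N + k) (\<lambda>j. truncate N (x j)) = (\<lambda>j. truncate N (x j))"
  by (auto simp: fun_eq_iff below_level_def truncate_def)

lemma wshift_funpow_below_level:
  "\<forall>n. bounded_cop (A n) \<Longrightarrow> p + k = L + i + j \<Longrightarrow> (wshift A ^^ i) (below_level k L x j) p = 0"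
  by (auto simp: wshift_funpow_apply below_level_def weight_prod_zero)

lemma hyponormal_form_below_at_level:
  assumes bounded: "\<forall>n. bounded_cop (A n)"
  shows "hyponormal_form (wshift A) k (below_level k L x) (at_level k L x) = 0"
    and "hyponormal_form (wshift A) k (at_level k L x) (below_level k L x) = 0"
  unfolding hyponormal_form_def at_level_def wshift_funpow_delta_seq[OF bounded]
    l2inner_delta_seq_left l2inner_delta_seq_right
  by (auto intro!: sum.neutral simp: wshift_funpow_below_level[OF bounded] level_entry_def
      weight_prod_zero[OF bounded])

lemma hyponormal_form_at_level:
  assumes bounded: "\<forall>n. bounded_cop (A n)"
  shows "hyponormal_form (wshift A) k (at_level k L x) (at_level k L x) =
    (\<Sum>i\<le>k. \<Sum>j\<le>k. cinner (weight_prod A (L + j - k) i (level_entry k L x j))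
      (weight_prod A (L + i - k) j (level_entry k L x i)))"
  unfolding hyponormal_form_def at_level_def wshift_funpow_delta_seq[OF bounded]
    l2inner_delta_seq_left
  by (intro sum.cong refl) (auto simp: delta_seq_def level_entry_def weight_prod_zero[OF bounded])

lemma hyponormal_form_below_level_nonneg:
  assumes bounded: "\<forall>n. bounded_cop (A n)" and norm_A: "\<And>n x. norm (A n x) \<le> M * norm x"
    and surj: "\<forall>n. surj (A n)" and embry: "\<And>q u. cpos (embry_weight_form A k q u)"
    and x: "\<forall>j\<le>k. x j \<in> l2seq"
  shows "cpos (hyponormal_form (wshift A) k (below_level k L x) (below_level k L x))"
proof (induction L)
  case 0
  have "hyponormal_form (wshift A) k (below_level k 0 x) (below_level k 0 x)
      = hyponormal_form (wshift A) k 0 0"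
    by (rule hyponormal_form_cong) (auto simp: below_level_def fun_eq_iff)
  also have "\<dots> = 0"
    by (simp add: hyponormal_form_def wshift_funpow_zero[OF bounded])
  finally show ?case
    by (simp add: cpos_def)
next
  case (Suc L)
  have below: "\<forall>j\<le>k. below_level k L x j \<in> l2seq"
    using x by (auto elim!: l2seq_dominated simp: below_level_def)
  have at: "\<forall>j\<le>k. at_level k L x j \<in> l2seq"
    by (simp add: at_level_def)
  have "hyponormal_form (wshift A) k (below_level k (Suc L) x) (below_level k (Suc L) x)
      = hyponormal_form (wshift A) k (below_level k L x) (below_level k L x)
        + hyponormal_form (wshift A) k (at_level k L x) (at_level k L x)"
    unfolding below_level_Suc
      hyponormal_form_add[OF wshift_add[OF bounded] wshift_l2seq[OF norm_A] below at]
      hyponormal_form_below_at_level[OF bounded]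
    by simp
  moreover have "cpos (hyponormal_form (wshift A) k (at_level k L x) (at_level k L x))"
    unfolding hyponormal_form_at_level[OF bounded]
    by (rule level_sum_nonneg[OF bounded surj embry]) (simp add: level_entry_def)
  ultimately show ?case
    using Suc.IH by (simp add: cpos_def)
qed

lemma hyponormal_form_truncate_tendsto:
  assumes bounded: "\<forall>n. bounded_cop (A n)" and norm_A: "\<And>n x. norm (A n x) \<le> M * norm x"
    and x: "\<forall>j\<le>k. x j \<in> l2seq"
  shows "(\<lambda>N. hyponormal_form (wshift A) k (\<lambda>j. truncate N (x j)) (\<lambda>j. truncate N (x j)))
    \<longlonglongrightarrow> hyponormal_form (wshift A) k x x"
proof -
  let ?f = "\<lambda>i j q. cinner ((wshift A ^^ i) (x j) q) ((wshift A ^^ j) (x i) q)"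
  have "min (N + i) (N + j) = N + min i j" for N i j :: nat
    by (simp add: min_def)
  then have partial_sums: "hyponormal_form (wshift A) k (\<lambda>j. truncate N (x j)) (\<lambda>j. truncate N (x j))
      = (\<Sum>i\<le>k. \<Sum>j\<le>k. \<Sum>q<N + min i j. ?f i j q)" for N
    by (simp add: hyponormal_form_def wshift_funpow_truncate[OF bounded] l2inner_truncate)
  have partial_limit: "(\<lambda>N. \<Sum>q<N + min i j. ?f i j q)
      \<longlonglongrightarrow> l2inner ((wshift A ^^ i) (x j)) ((wshift A ^^ j) (x i))"
    if "i \<le> k" "j \<le> k" for i j
  proof -
    have "summable (?f i j)"
      using x that funpow_in_l2seq[OF wshift_l2seq[OF norm_A]]
      by (intro summable_cinner_l2seq) simp_all
    then show ?thesis
      unfolding l2inner_def by (rule LIMSEQ_ignore_initial_segment[OF summable_LIMSEQ])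
  qed
  have "(\<lambda>N. \<Sum>i\<le>k. \<Sum>j\<le>k. \<Sum>q<N + min i j. ?f i j q) \<longlonglongrightarrow> hyponormal_form (wshift A) k x x"
    unfolding hyponormal_form_def by (intro tendsto_sum) (simp add: partial_limit)
  then show ?thesis
    by (simp only: partial_sums)
qed

lemma wshift_hyponormal_form_nonneg:
  assumes bounded: "\<forall>n. bounded_cop (A n)" and norm_A: "\<And>n x. norm (A n x) \<le> M * norm x"
    and surj: "\<forall>n. surj (A n)" and embry: "\<And>q u. cpos (embry_weight_form A k q u)"
    and x: "\<forall>j\<le>k. x j \<in> l2seq"
  shows "cpos (hyponormal_form (wshift A) k x x)"
proof -
  have "cpos (hyponormal_form (wshift A) k (\<lambda>j. truncate N (x j)) (\<lambda>j. truncate N (x j)))" for N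
  proof -
    have "\<forall>j\<le>k. truncate N (x j) \<in> l2seq"
      using x by (simp add: truncate_in_l2seq)
    from hyponormal_form_below_level_nonneg[OF bounded norm_A surj embry this, where L = "N + k"]
    show ?thesis
      by (simp only: below_level_truncate)
  qed
  then show ?thesis
    using closed_sequentially[OF closed_cpos _ hyponormal_form_truncate_tendsto[OF bounded norm_A x]]
    by blast
qed

theorem mainTheorem1:
  fixes A :: "nat \<Rightarrow> 'h::chilbert_space \<Rightarrow> 'h" and k :: nat
  assumes separable: "\<exists>D::'h set. countable D \<and> closure D = UNIV"
    and bounded: "\<forall>n. bounded_cop (A n)"
    and positive: "\<forall>n. positive_op (A n)"
    and invertible: "\<forall>n. invertible_op (A n)"
    and unif_bounded: "\<exists>M. \<forall>n. onorm (A n) \<le> M"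
    and k: "k \<ge> 1"
  shows "k_hyponormal k (wshift A) \<longleftrightarrow> embry_k_hyponormal k (wshift A)"
proof -
  obtain M where "\<forall>n. onorm (A n) \<le> M"
    using unif_bounded by blast
  then have norm_A: "norm (A n x) \<le> M * norm x" for n x
    using bounded_cop_norm_le_onorm[of "A n" x] bounded
    by (meson mult_right_mono norm_ge_zero order_trans)
  have surj: "\<forall>n. surj (A n)"
    using invertible by (simp add: invertible_op_surj)
  note adjoint = wshift_is_l2adjoint[OF bounded positive norm_A]
  note l2 = wshift_l2seq[OF norm_A]
  show ?thesis
  proof
    assume "k_hyponormal k (wshift A)"
    then show "embry_k_hyponormal k (wshift A)"
      by (rule k_hyponormal_imp_embry_k_hyponormal[OF adjoint l2])
  next
    assume "embry_k_hyponormal k (wshift A)"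
    then have "cpos (hyponormal_form (wshift A) k (\<lambda>j. (wshift A ^^ j) (delta_seq q (u j)))
        (\<lambda>j. (wshift A ^^ j) (delta_seq q (u j))))" for q u
      unfolding embry_k_hyponormal_iff_hyponormal_form[OF adjoint l2]
      by (auto dest: spec[of _ "\<lambda>j. delta_seq q (u j)"])
    then have "cpos (embry_weight_form A k q u)" for q u
      by (simp add: hyponormal_form_wshift_delta_seq[OF bounded])
    then show "k_hyponormal k (wshift A)"
      using wshift_hyponormal_form_nonneg[OF bounded norm_A surj]
      by (simp add: k_hyponormal_iff_hyponormal_form[OF adjoint l2])
  qed
qed

end
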